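(* Let $(G,S)$ and $(H,T)$ be finitely generated groups with finite generating sets, such that there exists a snake embedding $\phi:G\to H$ (from $(G,S)$ to $(H,T)$). Then the infinite snake problem (resp. the ouroboros problem) for $(G,S)$ many-one reduces to the infinite snake problem (resp. the ouroboros problem) for $(H,T)$.
   Context: An invertible-reversible transducer is a tuple $\mathcal M=(Q,S,T,q_0,\delta,\eta)$ with $Q$ a finite set of states, $q_0\in Q$, $\delta:Q\times S\to Q$, $\eta:Q\times S\to T$ with $\eta(q,\cdot)$ injective for every $q$, and such that for all $q\in Q$, $s\in S$ there is a unique $q'$ with $\delta(q',s)=q$. One extends by $\eta(q,s^{-1})=\eta(q',s)^{-1}$ and $\delta(q,s^{-1})=q'$ where $q'$ is the unique state with $\delta(q',s)=q$. For $w\in(S\cup S^{-1})^*$, $q_w$ is the state reached from $q_0$ after reading $w$, and $f_{\mathcal M}:(S\cup S^{-1})^*\to(T\cup T^{-1})^*$ is defined by $f_{\mathcal M}(\epsilon)=\epsilon$, $f_{\mathcal M}(ws^{\pm1})=f_{\mathcal M}(w)\eta(q_w,s^{\pm1})$. A map $\phi:G\to H$ is a snake embedding if there is such a transducer with $\phi(g)=\overline{f_{\mathcal M}(w)}$ for every word $w$ representing $g$, and $f_{\mathcal M}(w)=_H f_{\mathcal M}(w')$ iff $w=_G w'$. A tileset graph for $(G,S)$ is a finite multigraph $\Gamma=(A,B)$ with edges $(a,a',s)$, $a,a'\in A$, $s\in S\cup S^{-1}$, with $(a,a',s)\in B\Rightarrow(a',a,s^{-1})\in B$. A $\Gamma$-snake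 on $I\subseteq\mathbb{Z}$ ($I=\mathbb{Z}$, $\mathbb{N}$ or an interval) is $(\omega,\zeta)$, $\omega:I\to G$ injective, $\zeta:I\to A$, with $d\omega_i:=\omega(i)^{-1}\omega(i+1)\in S\cup S^{-1}$ and $(\zeta(i),\zeta(i+1),d\omega_i)\in B$ whenever $i,i+1\in I$. A $\Gamma$-ouroboros is such a pair on $\{0,\dots,n\}$, $n\ge3$, with $\omega$ injective on $\{0,\dots,n-1\}$ and $\omega(n)=\omega(0)$. The infinite snake problem (resp. ouroboros problem) for a group with generating set: given a tileset graph $\Gamma$, decide whether a $\Gamma$-snake on $\mathbb{Z}$ (resp. a $\Gamma$-ouroboros) exists. *)

theory Defs
  imports "HOL-Algebra.Generated_Groups" "HOL-Library.Nat_Bijection"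
begin

datatype recf = Zer | Succ | Proj nat | Comp recf "recf list" | Prim recf recf | Minim recf

inductive reval :: "recf \<Rightarrow> nat list \<Rightarrow> nat \<Rightarrow> bool" where
  zer: "reval Zer xs 0"
| succ: "reval Succ (x # xs) (Suc x)"
| proj: "i < length xs \<Longrightarrow> reval (Proj i) xs (xs ! i)"
| comp: "length ys = length gs \<Longrightarrow> (\<forall>j < length gs. reval (gs ! j) xs (ys ! j))
          \<Longrightarrow> reval f ys z \<Longrightarrow> reval (Comp f gs) xs z"
| prim0: "reval f xs y \<Longrightarrow> reval (Prim f g) (0 # xs) y"
| primS: "reval (Prim f g) (n # xs) y \<Longrightarrow> reval g (n # y # xs) z
          \<Longrightarrow> reval (Prim f g) (Suc n # xs) z"
| minim: "reval f (n # xs) 0 \<Longrightarrow> (\<forall>m < n. \<exists>y. reval f (m # xs) y \<and> 0 < y)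
          \<Longrightarrow> reval (Minim f) xs n"

definition computable :: "(nat \<Rightarrow> nat) \<Rightarrow> bool" where
  "computable f \<longleftrightarrow> (\<exists>r. \<forall>n. reval r [n] (f n))"

definition m_reducible :: "nat set \<Rightarrow> nat set \<Rightarrow> bool" where
  "m_reducible A B \<longleftrightarrow> (\<exists>f. computable f \<and> (\<forall>n. n \<in> A \<longleftrightarrow> f n \<in> B))"

text \<open>A finite generating set is given as a distinct list S of generators.
  A letter is a pair (i, b): (i, True) stands for S!i, (i, False) for its inverse.\<close>

definition fg_group :: "('g, 'a) monoid_scheme \<Rightarrow> 'g list \<Rightarrow> bool" where
  "fg_group G S \<longleftrightarrow> group G \<and> distinct S \<and> set S \<subseteq> carrier G \<and> generate G (set S) = carrier G"

definition lval :: "('g, 'a) monoid_scheme \<Rightarrow> 'g list \<Rightarrow> nat \<times> bool \<Rightarrow> 'g" where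
  "lval G S l = (if snd l then S ! fst l else inv\<^bsub>G\<^esub> (S ! fst l))"

definition word_val :: "('g, 'a) monoid_scheme \<Rightarrow> 'g list \<Rightarrow> (nat \<times> bool) list \<Rightarrow> 'g" where
  "word_val G S w = foldr (\<lambda>l x. lval G S l \<otimes>\<^bsub>G\<^esub> x) w \<one>\<^bsub>G\<^esub>"

definition words :: "nat \<Rightarrow> (nat \<times> bool) list set" where
  "words k = {w. \<forall>l \<in> set w. fst l < k}"

text \<open>States are natural numbers in a finite set Q; generators of S (resp. T) are
  referred to by their indices < k (resp. < m).\<close>

definition is_irt :: "nat \<Rightarrow> nat \<Rightarrow> nat set \<Rightarrow> nat \<Rightarrow> (nat \<Rightarrow> nat \<Rightarrow> nat) \<Rightarrow> (nat \<Rightarrow> nat \<Rightarrow> nat) \<Rightarrow> bool" where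
  "is_irt k m Q q0 \<delta> \<eta> \<longleftrightarrow> finite Q \<and> q0 \<in> Q
     \<and> (\<forall>q \<in> Q. \<forall>s < k. \<delta> q s \<in> Q \<and> \<eta> q s < m)
     \<and> (\<forall>q \<in> Q. inj_on (\<eta> q) {..<k})
     \<and> (\<forall>q \<in> Q. \<forall>s < k. \<exists>!q'. q' \<in> Q \<and> \<delta> q' s = q)"

definition dpred :: "nat set \<Rightarrow> (nat \<Rightarrow> nat \<Rightarrow> nat) \<Rightarrow> nat \<Rightarrow> nat \<Rightarrow> nat" where
  "dpred Q \<delta> q s = (THE q'. q' \<in> Q \<and> \<delta> q' s = q)"

definition dstep :: "nat set \<Rightarrow> (nat \<Rightarrow> nat \<Rightarrow> nat) \<Rightarrow> nat \<Rightarrow> nat \<times> bool \<Rightarrow> nat" where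
  "dstep Q \<delta> q l = (if snd l then \<delta> q (fst l) else dpred Q \<delta> q (fst l))"

definition estep :: "nat set \<Rightarrow> (nat \<Rightarrow> nat \<Rightarrow> nat) \<Rightarrow> (nat \<Rightarrow> nat \<Rightarrow> nat) \<Rightarrow> nat \<Rightarrow> nat \<times> bool \<Rightarrow> nat \<times> bool" where
  "estep Q \<delta> \<eta> q l = (if snd l then (\<eta> q (fst l), True)
                       else (\<eta> (dpred Q \<delta> q (fst l)) (fst l), False))"

text \<open>frun Q delta eta q w is the output of the transducer started in state q on w;
  f_M(w) = frun Q delta eta q0 w.\<close>
fun frun :: "nat set \<Rightarrow> (nat \<Rightarrow> nat \<Rightarrow> nat) \<Rightarrow> (nat \<Rightarrow> nat \<Rightarrow> nat) \<Rightarrow> nat \<Rightarrow> (nat \<times> bool) list \<Rightarrow> (nat \<times> bool) list" where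
  "frun Q \<delta> \<eta> q [] = []"
| "frun Q \<delta> \<eta> q (l # w) = estep Q \<delta> \<eta> q l # frun Q \<delta> \<eta> (dstep Q \<delta> q l) w"

definition snake_embedding :: "('g, 'a) monoid_scheme \<Rightarrow> 'g list \<Rightarrow> ('h, 'b) monoid_scheme \<Rightarrow> 'h list \<Rightarrow> ('g \<Rightarrow> 'h) \<Rightarrow> bool" where
  "snake_embedding G S H T \<phi> \<longleftrightarrow> (\<exists>Q q0 \<delta> \<eta>. is_irt (length S) (length T) Q q0 \<delta> \<eta>
     \<and> (\<forall>w \<in> words (length S). \<phi> (word_val G S w) = word_val H T (frun Q \<delta> \<eta> q0 w))
     \<and> (\<forall>w \<in> words (length S). \<forall>w' \<in> words (length S).
          word_val H T (frun Q \<delta> \<eta> q0 w) = word_val H T (frun Q \<delta> \<eta> q0 w')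
          \<longleftrightarrow> word_val G S w = word_val G S w'))"

text \<open>A natural number n encodes the list of edges (a, a', c) obtained by decoding n
  with list_decode and each entry with nested prod_decode. Tiles are natural numbers,
  c is a letter code: c encodes the letter (c div 2, even c), i.e. the group element
  S!(c div 2) if c is even and its inverse if c is odd.\<close>

definition code_letter :: "nat \<Rightarrow> nat \<times> bool" where
  "code_letter c = (c div 2, even c)"

definition flip_code :: "nat \<Rightarrow> nat" where
  "flip_code c = (if even c then c + 1 else c - 1)"

definition tedges :: "nat \<Rightarrow> (nat \<times> nat \<times> nat) list" where
  "tedges n = map (\<lambda>e. (fst (prod_decode e), prod_decode (snd (prod_decode e)))) (list_decode n)"

definition valid_tcode :: "nat \<Rightarrow> nat \<Rightarrow> bool" where
  "valid_tcode k n \<longleftrightarrow> (\<forall>(a, a', c) \<in> set (tedges n). c < 2 * k \<and> (a', a, flip_code c) \<in> set (tedges n))"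

definition has_infinite_snake :: "('g, 'a) monoid_scheme \<Rightarrow> 'g list \<Rightarrow> nat \<Rightarrow> bool" where
  "has_infinite_snake G S n \<longleftrightarrow> (\<exists>(\<omega> :: int \<Rightarrow> 'g) (\<zeta> :: int \<Rightarrow> nat).
     inj \<omega> \<and> range \<omega> \<subseteq> carrier G
     \<and> (\<forall>i. \<exists>c. (\<zeta> i, \<zeta> (i + 1), c) \<in> set (tedges n)
              \<and> inv\<^bsub>G\<^esub> (\<omega> i) \<otimes>\<^bsub>G\<^esub> \<omega> (i + 1) = lval G S (code_letter c)))"

definition has_ouroboros :: "('g, 'a) monoid_scheme \<Rightarrow> 'g list \<Rightarrow> nat \<Rightarrow> bool" where
  "has_ouroboros G S n \<longleftrightarrow> (\<exists>N \<ge> 3. \<exists>(\<omega> :: nat \<Rightarrow> 'g) (\<zeta> :: nat \<Rightarrow> nat).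
     inj_on \<omega> {..<N} \<and> \<omega> N = \<omega> 0 \<and> (\<forall>i \<le> N. \<omega> i \<in> carrier G)
     \<and> (\<forall>i < N. \<exists>c. (\<zeta> i, \<zeta> (i + 1), c) \<in> set (tedges n)
              \<and> inv\<^bsub>G\<^esub> (\<omega> i) \<otimes>\<^bsub>G\<^esub> \<omega> (i + 1) = lval G S (code_letter c)))"

definition infinite_snake_problem :: "('g, 'a) monoid_scheme \<Rightarrow> 'g list \<Rightarrow> nat set" where
  "infinite_snake_problem G S = {n. valid_tcode (length S) n \<and> has_infinite_snake G S n}"

definition ouroboros_problem :: "('g, 'a) monoid_scheme \<Rightarrow> 'g list \<Rightarrow> nat set" where
  "ouroboros_problem G S = {n. valid_tcode (length S) n \<and> has_ouroboros G S n}"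

end

(*
  Let M be the transducer of the snake embedding and Gamma a tileset graph for (G, S). The
  graph Gamma' for (H, T) has as tiles the pairs (a, q) of a tile of Gamma and a state of M
  reachable from q0, and for every edge a -c-> a' of Gamma and every such q an edge
  (a, q) -> (a', delta q c) labelled by the output of M on c in state q. Along a walk the states
  are determined by the letters, so labelled walks of Gamma in G and of Gamma' in H correspond.
  Reading a word from a reachable state q is reading it after a prefix that leads from q0 to q,
  so cancelling that prefix shows that M preserves the word problem from q as well: a walk in G
  returns to an earlier position iff its image in H does. Hence snakes and ouroboroi correspond,
  and reversibility of M makes Gamma' closed under reversing edges. The code of Gamma' is
  computed from the code of Gamma by primitive recursion along its list of edges.
*)
theory Submission
  imports Defs
begin

section \<open>General recursive functions\<close>

definition nary_computable :: "nat \<Rightarrow> (nat list \<Rightarrow> nat) \<Rightarrow> bool" where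
  "nary_computable n f \<longleftrightarrow> (\<exists>r. \<forall>xs. length xs = n \<longrightarrow> reval r xs (f xs))"

lemma computable_iff_nary: "computable f \<longleftrightarrow> nary_computable 1 (\<lambda>xs. f (hd xs))"
proof
  assume "computable f"
  then obtain r where "\<forall>n. reval r [n] (f n)" unfolding computable_def by blast
  moreover have "length xs = 1 \<Longrightarrow> xs = [hd xs]" for xs :: "nat list"
    by (cases xs) auto
  ultimately show "nary_computable 1 (\<lambda>xs. f (hd xs))"
    unfolding nary_computable_def by metis
next
  assume "nary_computable 1 (\<lambda>xs. f (hd xs))"
  then show "computable f"
    unfolding nary_computable_def computable_def by (metis One_nat_def length_Cons list.sel(1) list.size(3))
qed

lemma nary_computable_cong:
  "nary_computable n f \<Longrightarrow> (\<And>xs. length xs = n \<Longrightarrow> f xs = g xs) \<Longrightarrow> nary_computable n g"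
  unfolding nary_computable_def by metis

lemma nary_computable_nth: "i < n \<Longrightarrow> nary_computable n (\<lambda>xs. xs ! i)"
  unfolding nary_computable_def by (auto intro!: exI[of _ "Proj i"] reval.proj)

lemma nary_computable_Suc: "nary_computable 1 (\<lambda>xs. Suc (hd xs))"
  unfolding nary_computable_def
proof (intro exI[of _ Succ] allI impI)
  fix xs :: "nat list"
  assume "length xs = 1"
  then obtain x where "xs = [x]" by (cases xs) auto
  then show "reval Succ xs (Suc (hd xs))" by (auto intro: reval.succ)
qed

lemma nary_computable_const: "nary_computable n (\<lambda>_. c)"
proof (induction c)
  case 0
  show ?case unfolding nary_computable_def by (auto intro: reval.zer)
next
  case (Suc c)
  then obtain r where r: "\<forall>xs. length xs = n \<longrightarrow> reval r xs c"
    unfolding nary_computable_def by auto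
  have "reval (Comp Succ [r]) xs (Suc c)" if "length xs = n" for xs
    by (rule reval.comp[where ys = "[c]"]) (use r that in \<open>auto intro: reval.succ\<close>)
  then show ?case unfolding nary_computable_def by blast
qed

lemma nary_computable_compose:
  assumes h: "nary_computable (length gs) h" and gs: "\<forall>g \<in> set gs. nary_computable n g"
  shows "nary_computable n (\<lambda>xs. h (map (\<lambda>g. g xs) gs))"
proof -
  obtain rh where rh: "\<forall>ys. length ys = length gs \<longrightarrow> reval rh ys (h ys)"
    using h unfolding nary_computable_def by blast
  have "\<exists>rs. length rs = length gs \<and> (\<forall>j < length gs. \<forall>xs. length xs = n \<longrightarrow> reval (rs ! j) xs ((gs ! j) xs))"
    using gs
  proof (induction gs)
    case Nil
    show ?case by simp
  next
    case (Cons g gs)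
    obtain r where "\<forall>xs. length xs = n \<longrightarrow> reval r xs (g xs)"
      using Cons.prems unfolding nary_computable_def by auto
    moreover obtain rs where "length rs = length gs"
      and "\<forall>j < length gs. \<forall>xs. length xs = n \<longrightarrow> reval (rs ! j) xs ((gs ! j) xs)"
      using Cons by auto
    ultimately show ?case
      by (intro exI[of _ "r # rs"]) (auto simp: nth_Cons split: nat.split)
  qed
  then obtain rs where rs: "length rs = length gs"
    "\<forall>j < length gs. \<forall>xs. length xs = n \<longrightarrow> reval (rs ! j) xs ((gs ! j) xs)"
    by blast
  have "reval (Comp rh rs) xs (h (map (\<lambda>g. g xs) gs))" if "length xs = n" for xs
    by (rule reval.comp[where ys = "map (\<lambda>g. g xs) gs"]) (use rh rs that in auto)
  then show ?thesis unfolding nary_computable_def by blast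
qed

lemma nary_computable_unop:
  "nary_computable 1 h \<Longrightarrow> nary_computable n f \<Longrightarrow> nary_computable n (\<lambda>xs. h [f xs])"
  using nary_computable_compose[of "[f]" h n] by simp

lemma nary_computable_binop:
  "nary_computable 2 h \<Longrightarrow> nary_computable n f \<Longrightarrow> nary_computable n g
    \<Longrightarrow> nary_computable n (\<lambda>xs. h [f xs, g xs])"
  using nary_computable_compose[of "[f, g]" h n] by (simp add: numeral_2_eq_2)

lemma nary_computable_prim_rec:
  assumes f: "nary_computable n f" and g: "nary_computable (Suc (Suc n)) g"
    and h0: "\<And>ys. length ys = n \<Longrightarrow> h (0 # ys) = f ys"
    and hSuc: "\<And>k ys. length ys = n \<Longrightarrow> h (Suc k # ys) = g (k # h (k # ys) # ys)"
  shows "nary_computable (Suc n) h"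
proof -
  obtain rf rg where rf: "\<forall>ys. length ys = n \<longrightarrow> reval rf ys (f ys)"
    and rg: "\<forall>xs. length xs = Suc (Suc n) \<longrightarrow> reval rg xs (g xs)"
    using f g unfolding nary_computable_def by blast
  have prim: "reval (Prim rf rg) (k # ys) (h (k # ys))" if "length ys = n" for k ys
  proof (induction k)
    case 0
    then show ?case using rf h0 that by (auto intro: reval.prim0)
  next
    case (Suc k)
    then show ?case using rg hSuc that by (auto intro: reval.primS)
  qed
  have "reval (Prim rf rg) xs (h xs)" if "length xs = Suc n" for xs
    using that prim by (cases xs) auto
  then show ?thesis unfolding nary_computable_def by blast
qed

lemma nary_computable_Least:
  assumes f: "nary_computable (Suc n) f" and ex: "\<And>ys. length ys = n \<Longrightarrow> \<exists>k. f (k # ys) = 0"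
  shows "nary_computable n (\<lambda>ys. LEAST k. f (k # ys) = 0)"
proof -
  obtain r where r: "\<forall>xs. length xs = Suc n \<longrightarrow> reval r xs (f xs)"
    using f unfolding nary_computable_def by blast
  have "reval (Minim r) ys (LEAST k. f (k # ys) = 0)" if "length ys = n" for ys
  proof (rule reval.minim)
    show "reval r ((LEAST k. f (k # ys) = 0) # ys) 0"
      using r that LeastI_ex[OF ex[OF that]] by (metis length_Cons)
    show "\<forall>m < (LEAST k. f (k # ys) = 0). \<exists>y. reval r (m # ys) y \<and> 0 < y"
    proof (intro allI impI)
      fix m
      assume "m < (LEAST k. f (k # ys) = 0)"
      then have "f (m # ys) \<noteq> 0" by (rule not_less_Least)
      moreover have "reval r (m # ys) (f (m # ys))" using r that by simp
      ultimately show "\<exists>y. reval r (m # ys) y \<and> 0 < y" by blast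
    qed
  qed
  then show ?thesis unfolding nary_computable_def by blast
qed

lemma nary_computable_add: "nary_computable 2 (\<lambda>xs. xs ! 0 + xs ! 1)"
proof -
  have "nary_computable (Suc 1) (\<lambda>xs. xs ! 0 + xs ! 1)"
  proof (rule nary_computable_prim_rec)
    show "nary_computable 1 (\<lambda>ys. ys ! 0)" by (rule nary_computable_nth) simp
    show "nary_computable (Suc (Suc 1)) (\<lambda>xs. Suc (xs ! 1))"
      using nary_computable_unop[OF nary_computable_Suc nary_computable_nth[of 1 3]]
      by (simp add: numeral_3_eq_3)
  qed auto
  then show ?thesis by (simp add: numeral_2_eq_2)
qed

lemma nary_computable_mult: "nary_computable 2 (\<lambda>xs. xs ! 0 * xs ! 1)"
proof -
  have "nary_computable (Suc 1) (\<lambda>xs. xs ! 0 * xs ! 1)"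
  proof (rule nary_computable_prim_rec)
    show "nary_computable (Suc (Suc 1)) (\<lambda>xs. xs ! 1 + xs ! 2)"
      using nary_computable_binop[OF nary_computable_add nary_computable_nth[of 1 3] nary_computable_nth[of 2 3]]
      by (simp add: numeral_3_eq_3)
  qed (auto intro: nary_computable_const)
  then show ?thesis by (simp add: numeral_2_eq_2)
qed

lemma nary_computable_pred: "nary_computable 1 (\<lambda>xs. hd xs - 1)"
proof -
  have "nary_computable (Suc 0) (\<lambda>xs. hd xs - 1)"
    by (rule nary_computable_prim_rec[where g = "\<lambda>xs. xs ! 0"])
       (auto intro: nary_computable_const nary_computable_nth)
  then show ?thesis by simp
qed

lemma nary_computable_diff: "nary_computable 2 (\<lambda>xs. xs ! 0 - xs ! 1)"
proof -
  have "nary_computable (Suc 1) (\<lambda>xs. xs ! 1 - xs ! 0)"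
  proof (rule nary_computable_prim_rec)
    show "nary_computable 1 (\<lambda>ys. ys ! 0)" by (rule nary_computable_nth) simp
    show "nary_computable (Suc (Suc 1)) (\<lambda>xs. xs ! 1 - 1)"
      using nary_computable_unop[OF nary_computable_pred nary_computable_nth[of 1 3]]
      by (simp add: numeral_3_eq_3)
  qed auto
  then have "nary_computable 2 (\<lambda>xs. xs ! 1 - xs ! 0)" by (simp add: numeral_2_eq_2)
  from nary_computable_binop[OF this nary_computable_nth[of 1 2] nary_computable_nth[of 0 2]]
  show ?thesis by (rule nary_computable_cong) auto
qed

lemma computable_comp: "computable f \<Longrightarrow> computable g \<Longrightarrow> computable (\<lambda>x. f (g x))"
  unfolding computable_iff_nary using nary_computable_unop[of "\<lambda>xs. f (hd xs)" 1 "\<lambda>xs. g (hd xs)"]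
  by simp

lemma computable_binop:
  "nary_computable 2 h \<Longrightarrow> computable f \<Longrightarrow> computable g \<Longrightarrow> computable (\<lambda>x. h [f x, g x])"
  unfolding computable_iff_nary using nary_computable_binop[of h 1 "\<lambda>xs. f (hd xs)" "\<lambda>xs. g (hd xs)"]
  by simp

lemma computable_id: "computable (\<lambda>x. x)"
  unfolding computable_iff_nary
  by (rule nary_computable_cong[OF nary_computable_nth[of 0 1]]) (auto simp: length_Suc_conv)


lemma computable_const: "computable (\<lambda>_. c)"
  unfolding computable_iff_nary by (rule nary_computable_const)

lemma computable_Suc: "computable Suc"
  unfolding computable_iff_nary by (rule nary_computable_Suc)

lemma computable_add: "computable f \<Longrightarrow> computable g \<Longrightarrow> computable (\<lambda>x. f x + g x)"
  using computable_binop[OF nary_computable_add] by simp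

lemma computable_mult: "computable f \<Longrightarrow> computable g \<Longrightarrow> computable (\<lambda>x. f x * g x)"
  using computable_binop[OF nary_computable_mult] by simp

lemma computable_diff: "computable f \<Longrightarrow> computable g \<Longrightarrow> computable (\<lambda>x. f x - g x)"
  using computable_binop[OF nary_computable_diff] by simp

lemma computable_If:
  assumes "computable t" "computable f" "computable g"
  shows "computable (\<lambda>x. if t x = 0 then f x else g x)"
proof -
  \<comment> \<open>truncated subtraction makes \<open>1 - t x\<close> the indicator of \<open>t x = 0\<close>\<close>
  have "(if t x = 0 then f x else g x) = f x * (1 - t x) + g x * (1 - (1 - t x))" for x
    by (cases "t x") simp_all
  moreover have "computable (\<lambda>x. f x * (1 - t x) + g x * (1 - (1 - t x)))"
    by (intro computable_add computable_mult computable_diff computable_const assms)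
  ultimately show ?thesis by simp
qed

lemma computable_triangle: "computable triangle"
proof -
  have "nary_computable 2 (\<lambda>xs. xs ! 1 + Suc (xs ! 0))"
    using nary_computable_binop[OF nary_computable_add nary_computable_nth[of 1 2]
        nary_computable_unop[OF nary_computable_Suc nary_computable_nth[of 0 2]]]
    by simp
  then have "nary_computable (Suc 0) (\<lambda>xs. triangle (hd xs))"
    by (intro nary_computable_prim_rec[OF nary_computable_const[of 0 0]]) (auto simp: numeral_2_eq_2)
  then show ?thesis unfolding computable_iff_nary by simp
qed

lemma computable_prod_encode:
  assumes "computable f" "computable g"
  shows "computable (\<lambda>x. prod_encode (f x, g x))"
proof -
  have "computable (\<lambda>x. triangle (f x + g x) + f x)"
    by (intro computable_add computable_comp[OF computable_triangle] assms)
  then show ?thesis by (simp add: prod_encode_def)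
qed

lemma prod_decode_diagonal: "fst (prod_decode e) + snd (prod_decode e) = (LEAST s. e < triangle (Suc s))"
proof -
  obtain a b where ab: "prod_decode e = (a, b)" by fastforce
  then have e: "e = triangle (a + b) + a"
    using prod_decode_inverse[of e] by (simp add: prod_encode_def)
  have mono: "triangle s \<le> triangle t" if "s \<le> t" for s t
    using that by (induction t rule: dec_induct) auto
  show ?thesis unfolding ab
  proof (rule Least_equality[symmetric])
    show "e < triangle (Suc (fst (a, b) + snd (a, b)))" using e by simp
    fix s
    assume "e < triangle (Suc s)"
    then show "fst (a, b) + snd (a, b) \<le> s"
      using mono[of "Suc s" "a + b"] e by (cases "Suc s \<le> a + b") auto
  qed
qed

lemma computable_prod_decode_diagonal: "computable (\<lambda>e. fst (prod_decode e) + snd (prod_decode e))"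
proof -
  have "nary_computable 1 (\<lambda>xs. triangle (Suc (hd xs)))"
    using computable_comp[OF computable_triangle computable_Suc] unfolding computable_iff_nary .
  from nary_computable_unop[OF this nary_computable_nth[of 0 2]]
  have "nary_computable 2 (\<lambda>xs. triangle (Suc (xs ! 0)))" by (simp del: triangle_Suc)
  from nary_computable_binop[OF nary_computable_diff this nary_computable_nth[of 1 2]]
  have "nary_computable 2 (\<lambda>xs. triangle (Suc (xs ! 0)) - xs ! 1)" by (simp del: triangle_Suc)
  from nary_computable_binop[OF nary_computable_diff nary_computable_const this]
  have "nary_computable 2 (\<lambda>xs. 1 - (triangle (Suc (xs ! 0)) - xs ! 1))" by (simp del: triangle_Suc)
  then have "nary_computable (Suc 1) (\<lambda>xs. 1 - (triangle (Suc (xs ! 0)) - xs ! 1))"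
    by (simp only: Suc_1)
  then have "nary_computable 1 (\<lambda>ys. LEAST k. 1 - (triangle (Suc ((k # ys) ! 0)) - (k # ys) ! 1) = 0)"
  proof (rule nary_computable_Least)
    fix ys :: "nat list"
    have "ys ! 0 < triangle (Suc (ys ! 0))" by (induction "ys ! 0") auto
    then show "\<exists>k. 1 - (triangle (Suc ((k # ys) ! 0)) - (k # ys) ! 1) = 0"
      by (intro exI[of _ "ys ! 0"]) simp
  qed
  then have "computable (\<lambda>e. LEAST s. e < triangle (Suc s))"
    unfolding computable_iff_nary
    by (rule nary_computable_cong) (auto simp del: triangle_Suc simp: length_Suc_conv Suc_le_eq)
  then show ?thesis by (simp add: prod_decode_diagonal)
qed

lemma computable_fst_prod_decode:
  assumes "computable f" shows "computable (\<lambda>x. fst (prod_decode (f x)))"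
proof -
  have "fst (prod_decode e) = e - triangle (fst (prod_decode e) + snd (prod_decode e))" for e
    using prod_decode_inverse[of e] by (cases "prod_decode e") (simp add: prod_encode_def)
  moreover have "computable (\<lambda>e. e - triangle (fst (prod_decode e) + snd (prod_decode e)))"
    by (intro computable_diff computable_id computable_comp[OF computable_triangle]
        computable_prod_decode_diagonal)
  ultimately have "computable (\<lambda>e. fst (prod_decode e))" by simp
  then show ?thesis using assms by (rule computable_comp)
qed

lemma computable_snd_prod_decode:
  assumes "computable f" shows "computable (\<lambda>x. snd (prod_decode (f x)))"
proof -
  have "computable (\<lambda>e. (fst (prod_decode e) + snd (prod_decode e)) - fst (prod_decode e))"
    by (intro computable_diff computable_prod_decode_diagonal computable_fst_prod_decode computable_id)
  then have "computable (\<lambda>e. snd (prod_decode e))" by simp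
  then show ?thesis using assms by (rule computable_comp)
qed

lemma computable_eventually_const: "(\<And>c. K \<le> c \<Longrightarrow> f c = d) \<Longrightarrow> computable f"
proof (induction K arbitrary: f)
  case 0
  then have "f = (\<lambda>_. d)" by auto
  then show ?case by (simp add: computable_const)
next
  case (Suc K)
  have "computable (\<lambda>c. f (Suc c))" by (rule Suc.IH) (use Suc.prems in auto)
  from nary_computable_unop[OF this[unfolded computable_iff_nary] nary_computable_nth[of 0 2]]
  have "nary_computable 2 (\<lambda>xs. f (Suc (xs ! 0)))" by simp
  then have "nary_computable (Suc 0) (\<lambda>xs. f (hd xs))"
    by (intro nary_computable_prim_rec[OF nary_computable_const[of 0 "f 0"]]) (auto simp: numeral_2_eq_2)
  then show ?case unfolding computable_iff_nary by simp
qed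

lemma computable_funpow:
  assumes init: "computable init" and step: "computable step"
  shows "computable (\<lambda>n. (step ^^ n) (init n))"
proof -
  from nary_computable_unop[OF step[unfolded computable_iff_nary] nary_computable_nth[of 1 3]]
  have g: "nary_computable (Suc (Suc 1)) (\<lambda>xs. step (xs ! 1))" by (simp add: numeral_3_eq_3)
  have f: "nary_computable 1 (\<lambda>xs. init (xs ! 0))"
    using init unfolding computable_iff_nary by (rule nary_computable_cong) (auto simp: length_Suc_conv)
  have "nary_computable (Suc 1) (\<lambda>xs. (step ^^ (xs ! 0)) (init (xs ! 1)))"
    by (rule nary_computable_prim_rec[OF f g]) auto
  then have "nary_computable 2 (\<lambda>xs. (step ^^ (xs ! 0)) (init (xs ! 1)))"
    by (simp only: Suc_1)
  from computable_binop[OF this computable_id computable_id] show ?thesis by simp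
qed


section \<open>Codes of lists and of product tileset graphs\<close>

lemma length_le_list_encode: "length xs \<le> list_encode xs"
proof (induction xs)
  case (Cons x xs)
  then show ?case using le_prod_encode_2[of "list_encode xs" x] by simp
qed simp

lemma computable_list_encode_prepend:
  assumes "\<forall>E \<in> set Es. computable E" and "computable b"
  shows "computable (\<lambda>x. list_encode (map (\<lambda>E. E x) Es @ list_decode (b x)))"
  using assms(1)
proof (induction Es)
  case Nil
  then show ?case using assms(2) by simp
next
  case (Cons E Es)
  then show ?case by (simp add: computable_comp[OF computable_Suc] computable_prod_encode)
qed

(* A state codes a pair (input, output) of list codes; a step moves the head x of the input to
   the front of the output as the block [E x. E <- Es]. *)
definition concat_map_step :: "(nat \<Rightarrow> nat) list \<Rightarrow> nat \<Rightarrow> nat" where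
  "concat_map_step Es s = (if fst (prod_decode s) = 0 then s else
     prod_encode (snd (prod_decode (fst (prod_decode s) - 1)),
       list_encode (map (\<lambda>E. E (fst (prod_decode (fst (prod_decode s) - 1)))) Es @ list_decode (snd (prod_decode s)))))"

lemma concat_map_step_Cons:
  "concat_map_step Es (prod_encode (list_encode (x # xs), list_encode out))
    = prod_encode (list_encode xs, list_encode (map (\<lambda>E. E x) Es @ out))"
  by (simp add: concat_map_step_def)

lemma funpow_concat_map_step:
  "length xs \<le> j \<Longrightarrow> (concat_map_step Es ^^ j) (prod_encode (list_encode xs, list_encode out))
    = prod_encode (0, list_encode (concat (map (\<lambda>x. map (\<lambda>E. E x) Es) (rev xs)) @ out))"
proof (induction xs arbitrary: j out)
  case Nil
  have "(concat_map_step Es ^^ j) (prod_encode (0, y)) = prod_encode (0, y)" for y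
    by (induction j) (simp_all add: concat_map_step_def)
  then show ?case by simp
next
  case (Cons x xs)
  then obtain j' where j: "j = Suc j'" "length xs \<le> j'" by (cases j) auto
  then have "(concat_map_step Es ^^ j) (prod_encode (list_encode (x # xs), list_encode out))
      = (concat_map_step Es ^^ j') (prod_encode (list_encode xs, list_encode (map (\<lambda>E. E x) Es @ out)))"
    by (simp only: funpow_Suc_right o_apply concat_map_step_Cons)
  then show ?case using Cons.IH[OF j(2)] by simp
qed

lemma computable_concat_map_step:
  assumes "\<forall>E \<in> set Es. computable E"
  shows "computable (concat_map_step Es)"
proof -
  have head: "computable (\<lambda>s. fst (prod_decode (fst (prod_decode s) - 1)))"
    by (intro computable_fst_prod_decode computable_diff computable_id computable_const)
  have "\<forall>E' \<in> set (map (\<lambda>E s. E (fst (prod_decode (fst (prod_decode s) - 1)))) Es). computable E'"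
    using assms computable_comp[OF _ head] by auto
  from computable_list_encode_prepend[OF this computable_snd_prod_decode[OF computable_id]]
  have "computable (\<lambda>s. list_encode (map (\<lambda>E. E (fst (prod_decode (fst (prod_decode s) - 1)))) Es
      @ list_decode (snd (prod_decode s))))"
    by (simp add: o_def)
  then show ?thesis
    unfolding concat_map_step_def
    by (intro computable_If computable_prod_encode computable_fst_prod_decode computable_snd_prod_decode
        computable_diff computable_id computable_const)
qed

lemma computable_list_concat_map:
  assumes "\<forall>E \<in> set Es. computable E"
  shows "computable (\<lambda>n. list_encode (concat (map (\<lambda>x. map (\<lambda>E. E x) Es) (rev (list_decode n)))))"
proof -
  have "computable (\<lambda>n. snd (prod_decode ((concat_map_step Es ^^ n) (prod_encode (n, 0)))))"
    using computable_concat_map_step[OF assms]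
    by (intro computable_snd_prod_decode computable_funpow computable_prod_encode computable_id computable_const)
  moreover have "snd (prod_decode ((concat_map_step Es ^^ n) (prod_encode (n, 0))))
      = list_encode (concat (map (\<lambda>x. map (\<lambda>E. E x) Es) (rev (list_decode n))))" for n
    using funpow_concat_map_step[of "list_decode n" n Es "[]"] length_le_list_encode[of "list_decode n"]
    by simp
  ultimately show ?thesis by simp
qed

definition edge_code :: "nat \<times> nat \<times> nat \<Rightarrow> nat" where
  "edge_code = (\<lambda>(a, a', c). prod_encode (a, prod_encode (a', c)))"

lemma tedges_list_encode_edge_code [simp]: "tedges (list_encode (map edge_code es)) = es"
  by (induction es) (auto simp: tedges_def edge_code_def)

(* In state q, nu q c is the next state and mu q c the output label after reading label c. *)
definition product_edge :: "(nat \<Rightarrow> nat \<Rightarrow> nat) \<Rightarrow> (nat \<Rightarrow> nat \<Rightarrow> nat) \<Rightarrow> nat \<Rightarrow> nat \<times> nat \<times> nat \<Rightarrow> nat \<times> nat \<times> nat" where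
  "product_edge \<nu> \<mu> q = (\<lambda>(a, a', c). (prod_encode (a, q), prod_encode (a', \<nu> q c), \<mu> q c))"

definition product_tcode :: "(nat \<Rightarrow> nat \<Rightarrow> nat) \<Rightarrow> (nat \<Rightarrow> nat \<Rightarrow> nat) \<Rightarrow> nat list \<Rightarrow> nat \<Rightarrow> nat" where
  "product_tcode \<nu> \<mu> qs n =
     list_encode (map edge_code (concat (map (\<lambda>e. map (\<lambda>q. product_edge \<nu> \<mu> q e) qs) (rev (tedges n)))))"

lemma tedges_product_tcode:
  "set (tedges (product_tcode \<nu> \<mu> qs n)) = {product_edge \<nu> \<mu> q e | e q. e \<in> set (tedges n) \<and> q \<in> set qs}"
  unfolding product_tcode_def by auto

lemma computable_product_tcode:
  assumes "\<And>q. q \<in> set qs \<Longrightarrow> computable (\<nu> q) \<and> computable (\<mu> q)"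
  shows "computable (product_tcode \<nu> \<mu> qs)"
proof -
  define E where "E q x = prod_encode (prod_encode (fst (prod_decode x), q),
      prod_encode (prod_encode (fst (prod_decode (snd (prod_decode x))), \<nu> q (snd (prod_decode (snd (prod_decode x))))),
        \<mu> q (snd (prod_decode (snd (prod_decode x))))))" for q x
  have E_eq: "E q x = edge_code (product_edge \<nu> \<mu> q (fst (prod_decode x), prod_decode (snd (prod_decode x))))"
    for q x
    by (simp add: E_def edge_code_def product_edge_def case_prod_beta)
  have c: "computable (\<lambda>x. fst (prod_decode x))" "computable (\<lambda>x. fst (prod_decode (snd (prod_decode x))))"
    "computable (\<lambda>x. snd (prod_decode (snd (prod_decode x))))"
    by (intro computable_fst_prod_decode computable_snd_prod_decode computable_id)+
  have "computable (E q)" if "q \<in> set qs" for q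
    using assms[OF that] unfolding E_def
    by (intro computable_prod_encode[OF computable_prod_encode[OF c(1) computable_const]]
        computable_prod_encode[OF computable_prod_encode[OF c(2)]] computable_comp[OF _ c(3)]) simp_all
  then have "computable (\<lambda>n. list_encode (concat (map (\<lambda>x. map (\<lambda>E. E x) (map E qs)) (rev (list_decode n)))))"
    by (intro computable_list_concat_map) auto
  moreover have "product_tcode \<nu> \<mu> qs
      = (\<lambda>n. list_encode (concat (map (\<lambda>x. map (\<lambda>E. E x) (map E qs)) (rev (list_decode n)))))"
    unfolding product_tcode_def tedges_def E_eq by (simp add: map_concat rev_map o_def)
  ultimately show ?thesis by simp
qed


section \<open>Letters, words and walks\<close>

definition inv_letter :: "nat \<times> bool \<Rightarrow> nat \<times> bool" where
  "inv_letter l = (fst l, \<not> snd l)"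

definition letter_code :: "nat \<times> bool \<Rightarrow> nat" where
  "letter_code l = 2 * fst l + (if snd l then 0 else 1)"

lemma fst_inv_letter [simp]: "fst (inv_letter l) = fst l"
  and inv_letter_inv_letter [simp]: "inv_letter (inv_letter l) = l"
  by (simp_all add: inv_letter_def)

lemma code_letter_letter_code [simp]: "code_letter (letter_code l) = l"
  unfolding code_letter_def letter_code_def by (cases l) auto

lemma letter_code_code_letter [simp]: "letter_code (code_letter c) = c"
  unfolding code_letter_def letter_code_def by simp

lemma letter_code_inv_letter: "letter_code (inv_letter l) = flip_code (letter_code l)"
  unfolding letter_code_def inv_letter_def flip_code_def by auto

lemma code_letter_flip_code: "code_letter (flip_code c) = inv_letter (code_letter c)"
  by (metis code_letter_letter_code letter_code_code_letter letter_code_inv_letter)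

lemma letter_code_less_iff [simp]: "letter_code l < 2 * m \<longleftrightarrow> fst l < m"
  unfolding letter_code_def by auto

lemma fst_code_letter_less_iff [simp]: "fst (code_letter c) < k \<longleftrightarrow> c < 2 * k"
  by (metis letter_code_code_letter letter_code_less_iff)

lemma flip_code_less: "c < 2 * k \<Longrightarrow> flip_code c < 2 * k"
  by (metis code_letter_flip_code fst_code_letter_less_iff fst_inv_letter)

lemma valid_tcodeD:
  "valid_tcode k n \<Longrightarrow> (a, a', c) \<in> set (tedges n) \<Longrightarrow> c < 2 * k \<and> (a', a, flip_code c) \<in> set (tedges n)"
  unfolding valid_tcode_def by fast

lemma valid_tcodeI:
  "(\<And>a a' c. (a, a', c) \<in> set (tedges n) \<Longrightarrow> c < 2 * k \<and> (a', a, flip_code c) \<in> set (tedges n))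
    \<Longrightarrow> valid_tcode k n"
  unfolding valid_tcode_def by fast

lemma int_recursion:
  assumes "P start" and f: "\<And>i x. P x \<Longrightarrow> P (f i x)" and g: "\<And>i x. P x \<Longrightarrow> P (g i x)"
    and f_g: "\<And>i x. P x \<Longrightarrow> f i (g i x) = x"
  shows "\<exists>x. (\<forall>i. P (x i)) \<and> (\<forall>i::int. x (i + 1) = f i (x i))"
proof -
  define fw where "fw = rec_nat start (\<lambda>n x. f (int n) x)"
  define bw where "bw = rec_nat start (\<lambda>n x. g (- int n - 1) x)"
  have P: "P (fw n) \<and> P (bw n)" for n
    by (induction n) (simp_all add: fw_def bw_def assms)
  define x where "x i = (if 0 \<le> i then fw (nat i) else bw (nat (- i)))" for i
  have "x (i + 1) = f i (x i)" for i
  proof (cases "0 \<le> i")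
    case True
    then have "nat (i + 1) = Suc (nat i)" by simp
    with True show ?thesis by (simp add: x_def fw_def)
  next
    case False
    define n where "n = nat (- i - 1)"
    have i: "i = - int n - 1" and "nat (- i) = Suc n" using False by (auto simp: n_def)
    then have "x i = g i (bw n)" by (simp add: x_def bw_def)
    moreover have "x (- int n) = bw n"
      by (cases n) (simp_all add: x_def fw_def bw_def del: of_nat_Suc)
    then have "x (i + 1) = bw n" using i by simp
    ultimately show ?thesis using f_g P by simp
  qed
  moreover have "P (x i)" for i using P by (simp add: x_def)
  ultimately show ?thesis by blast
qed

locale letter_group = group G for G :: "('g, 'a) monoid_scheme" (structure) +
  fixes S :: "'g list"
  assumes letters_closed: "set S \<subseteq> carrier G"
begin

lemma letter_closed: "i < length S \<Longrightarrow> S ! i \<in> carrier G"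
  using letters_closed nth_mem by blast

lemma lval_closed: "fst l < length S \<Longrightarrow> lval G S l \<in> carrier G"
  unfolding lval_def using letter_closed by simp

lemma word_val_Nil [simp]: "word_val G S [] = \<one>"
  and word_val_Cons: "word_val G S (l # w) = lval G S l \<otimes> word_val G S w"
  by (simp_all add: word_val_def)

lemma word_val_closed: "w \<in> words (length S) \<Longrightarrow> word_val G S w \<in> carrier G"
  by (induction w) (auto simp: words_def word_val_Cons lval_closed)

lemma word_val_append:
  "u \<in> words (length S) \<Longrightarrow> w \<in> words (length S) \<Longrightarrow> word_val G S (u @ w) = word_val G S u \<otimes> word_val G S w"
  by (induction u) (auto simp: word_val_Cons words_def word_val_closed lval_closed m_assoc)

lemma word_val_singleton: "fst l < length S \<Longrightarrow> word_val G S [l] = lval G S l"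
  by (simp add: word_val_Cons lval_closed)

lemma lval_inj:
  assumes "distinct S" "fst l1 < length S" "fst l2 < length S" "snd l1 = snd l2"
    and "lval G S l1 = lval G S l2"
  shows "l1 = l2"
proof -
  have "S ! fst l1 = S ! fst l2"
  proof (cases "snd l1")
    case False
    then have "inv (S ! fst l1) = inv (S ! fst l2)"
      using assms(4,5) by (simp add: lval_def)
    then show ?thesis using letter_closed assms(2,3) by (metis inv_inv)
  qed (use assms(4,5) in \<open>simp add: lval_def\<close>)
  then have "fst l1 = fst l2"
    using assms(1-3) nth_eq_iff_index_eq by blast
  then show ?thesis
    using assms(4) by (simp add: prod_eq_iff)
qed

lemma walk_word_val:
  fixes i :: "'i::semiring_1"
  assumes "\<omega> i \<in> carrier G" and "\<forall>t<n. fst (L (i + of_nat t)) < length S"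
    and "\<forall>t<n. \<omega> (i + of_nat t + 1) = \<omega> (i + of_nat t) \<otimes> lval G S (L (i + of_nat t))"
  shows "\<omega> (i + of_nat n) = \<omega> i \<otimes> word_val G S (map (\<lambda>t. L (i + of_nat t)) [0..<n])"
  using assms(2,3)
proof (induction n)
  case 0
  then show ?case using assms(1) by simp
next
  case (Suc n)
  let ?w = "map (\<lambda>t. L (i + of_nat t)) [0..<n]"
  have w: "?w \<in> words (length S)" and l: "[L (i + of_nat n)] \<in> words (length S)"
    using Suc.prems(1) by (auto simp: words_def)
  have "\<omega> (i + of_nat (Suc n)) = \<omega> (i + of_nat n + 1)" by (simp add: ac_simps)
  also have "\<dots> = \<omega> i \<otimes> word_val G S ?w \<otimes> word_val G S [L (i + of_nat n)]"
    using Suc by (simp add: word_val_singleton)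
  also have "\<dots> = \<omega> i \<otimes> word_val G S (?w @ [L (i + of_nat n)])"
    using w l assms(1) by (simp add: word_val_append word_val_closed m_assoc)
  finally show ?case by simp
qed

lemma walk_returns_iff:
  fixes i :: "'i::semiring_1"
  assumes "\<omega> i \<in> carrier G" and "\<forall>t<n. fst (L (i + of_nat t)) < length S"
    and "\<forall>t<n. \<omega> (i + of_nat t + 1) = \<omega> (i + of_nat t) \<otimes> lval G S (L (i + of_nat t))"
  shows "\<omega> (i + of_nat n) = \<omega> i \<longleftrightarrow> word_val G S (map (\<lambda>t. L (i + of_nat t)) [0..<n]) = \<one>"
proof -
  have "map (\<lambda>t. L (i + of_nat t)) [0..<n] \<in> words (length S)"
    using assms(2) by (auto simp: words_def)
  then show ?thesis
    using walk_word_val[OF assms] assms(1) by (simp add: word_val_closed)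
qed

lemma int_walk_exists:
  assumes "\<forall>i. v i \<in> carrier G"
  shows "\<exists>\<omega>. (\<forall>i. \<omega> i \<in> carrier G) \<and> (\<forall>i::int. \<omega> (i + 1) = \<omega> i \<otimes> v i)"
  by (rule int_recursion[where g = "\<lambda>i x. x \<otimes> inv v i"]) (use assms in \<open>auto simp: m_assoc\<close>)

lemma nat_walk_exists:
  fixes N :: nat and v :: "nat \<Rightarrow> 'g"
  assumes "\<forall>i<N. v i \<in> carrier G"
  shows "\<exists>\<omega>. (\<forall>i\<le>N. \<omega> i \<in> carrier G) \<and> (\<forall>i<N. \<omega> (i + 1) = \<omega> i \<otimes> v i)"
proof -
  define \<omega> where "\<omega> = rec_nat \<one> (\<lambda>i x. x \<otimes> v i)"
  have "\<omega> i \<in> carrier G" if "i \<le> N" for i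
    using that assms by (induction i) (simp_all add: \<omega>_def)
  then show ?thesis by (intro exI[of _ \<omega>]) (simp add: \<omega>_def)
qed

lemma edge_step_iff:
  assumes "valid_tcode (length S) n" "(a, a', c) \<in> set (tedges n)" "x \<in> carrier G" "y \<in> carrier G"
  shows "inv x \<otimes> y = lval G S (code_letter c) \<longleftrightarrow> y = x \<otimes> lval G S (code_letter c)"
  using valid_tcodeD[OF assms(1,2)] assms(3,4) by (simp add: lval_closed inv_solve_left')

lemma has_infinite_snake_iff:
  assumes valid: "valid_tcode (length S) n"
  shows "has_infinite_snake G S n \<longleftrightarrow> (\<exists>\<omega> \<zeta> c. inj \<omega> \<and> (\<forall>i. \<omega> i \<in> carrier G) \<and>
     (\<forall>i::int. (\<zeta> i, \<zeta> (i + 1), c i) \<in> set (tedges n) \<and> \<omega> (i + 1) = \<omega> i \<otimes> lval G S (code_letter (c i))))"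
    (is "_ \<longleftrightarrow> ?snake")
proof
  assume "has_infinite_snake G S n"
  then obtain \<omega> :: "int \<Rightarrow> 'g" and \<zeta> :: "int \<Rightarrow> nat" where \<omega>: "inj \<omega>" "\<forall>i. \<omega> i \<in> carrier G"
    and e: "\<forall>i. \<exists>c. (\<zeta> i, \<zeta> (i + 1), c) \<in> set (tedges n) \<and> inv (\<omega> i) \<otimes> \<omega> (i + 1) = lval G S (code_letter c)"
    unfolding has_infinite_snake_def by (auto simp: image_subset_iff)
  from choice[OF e] obtain c where c: "\<forall>i. (\<zeta> i, \<zeta> (i + 1), c i) \<in> set (tedges n)
      \<and> inv (\<omega> i) \<otimes> \<omega> (i + 1) = lval G S (code_letter (c i))"
    by blast
  have "(\<zeta> i, \<zeta> (i + 1), c i) \<in> set (tedges n) \<and> \<omega> (i + 1) = \<omega> i \<otimes> lval G S (code_letter (c i))" for i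
    using c edge_step_iff[OF valid _ \<omega>(2)[rule_format] \<omega>(2)[rule_format]] by blast
  with \<omega> show ?snake by blast
next
  assume ?snake
  then obtain \<omega> :: "int \<Rightarrow> 'g" and \<zeta> c where \<omega>: "inj \<omega>" "\<forall>i. \<omega> i \<in> carrier G"
    and c: "\<forall>i. (\<zeta> i, \<zeta> (i + 1), c i) \<in> set (tedges n) \<and> \<omega> (i + 1) = \<omega> i \<otimes> lval G S (code_letter (c i))"
    by blast
  have "(\<zeta> i, \<zeta> (i + 1), c i) \<in> set (tedges n) \<and> inv (\<omega> i) \<otimes> \<omega> (i + 1) = lval G S (code_letter (c i))" for i
    using c edge_step_iff[OF valid _ \<omega>(2)[rule_format] \<omega>(2)[rule_format]] by blast
  with \<omega> show "has_infinite_snake G S n" unfolding has_infinite_snake_def by blast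
qed

lemma has_ouroboros_iff:
  assumes valid: "valid_tcode (length S) n"
  shows "has_ouroboros G S n \<longleftrightarrow> (\<exists>N::nat \<ge> 3. \<exists>\<omega> \<zeta> c. inj_on \<omega> {..<N} \<and> \<omega> N = \<omega> 0 \<and> (\<forall>i \<le> N. \<omega> i \<in> carrier G) \<and>
     (\<forall>i < N. (\<zeta> i, \<zeta> (i + 1), c i) \<in> set (tedges n) \<and> \<omega> (i + 1) = \<omega> i \<otimes> lval G S (code_letter (c i))))"
    (is "_ \<longleftrightarrow> ?ouroboros")
proof
  assume "has_ouroboros G S n"
  then obtain N and \<omega> :: "nat \<Rightarrow> 'g" and \<zeta> :: "nat \<Rightarrow> nat" where
    \<omega>: "N \<ge> 3" "inj_on \<omega> {..<N}" "\<omega> N = \<omega> 0" "\<forall>i \<le> N. \<omega> i \<in> carrier G"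
    and e: "\<forall>i < N. \<exists>c. (\<zeta> i, \<zeta> (i + 1), c) \<in> set (tedges n)
      \<and> inv (\<omega> i) \<otimes> \<omega> (i + 1) = lval G S (code_letter c)"
    unfolding has_ouroboros_def by blast
  have "\<forall>i. \<exists>c. i < N \<longrightarrow> (\<zeta> i, \<zeta> (i + 1), c) \<in> set (tedges n)
      \<and> inv (\<omega> i) \<otimes> \<omega> (i + 1) = lval G S (code_letter c)"
    using e by blast
  from choice[OF this] obtain c where c: "\<forall>i < N. (\<zeta> i, \<zeta> (i + 1), c i) \<in> set (tedges n)
      \<and> inv (\<omega> i) \<otimes> \<omega> (i + 1) = lval G S (code_letter (c i))"
    by blast
  have "(\<zeta> i, \<zeta> (i + 1), c i) \<in> set (tedges n) \<and> \<omega> (i + 1) = \<omega> i \<otimes> lval G S (code_letter (c i))"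
    if "i < N" for i
  proof -
    have "\<omega> i \<in> carrier G" "\<omega> (i + 1) \<in> carrier G" using \<omega>(4) that by simp_all
    then show ?thesis using c that edge_step_iff[OF valid] by blast
  qed
  then show ?ouroboros using \<omega> by (intro exI[of _ N] conjI exI[of _ \<omega>] exI[of _ \<zeta>] exI[of _ c]) auto
next
  assume ?ouroboros
  then obtain N and \<omega> :: "nat \<Rightarrow> 'g" and \<zeta> c where
    \<omega>: "N \<ge> 3" "inj_on \<omega> {..<N}" "\<omega> N = \<omega> 0" "\<forall>i \<le> N. \<omega> i \<in> carrier G"
    and c: "\<forall>i < N. (\<zeta> i, \<zeta> (i + 1), c i) \<in> set (tedges n) \<and> \<omega> (i + 1) = \<omega> i \<otimes> lval G S (code_letter (c i))"
    by blast
  have "(\<zeta> i, \<zeta> (i + 1), c i) \<in> set (tedges n) \<and> inv (\<omega> i) \<otimes> \<omega> (i + 1) = lval G S (code_letter (c i))"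
    if "i < N" for i
  proof -
    have "\<omega> i \<in> carrier G" "\<omega> (i + 1) \<in> carrier G" using \<omega>(4) that by simp_all
    then show ?thesis using c that edge_step_iff[OF valid] by blast
  qed
  then show "has_ouroboros G S n"
    unfolding has_ouroboros_def using \<omega> by (intro exI[of _ N] conjI exI[of _ \<omega>] exI[of _ \<zeta>]) auto
qed

end


section \<open>Invertible-reversible transducers\<close>

lemma snd_estep [simp]: "snd (estep Q \<delta> \<eta> q l) = snd l"
  by (simp add: estep_def)

lemma frun_append: "frun Q \<delta> \<eta> q (u @ w) = frun Q \<delta> \<eta> q u @ frun Q \<delta> \<eta> (foldl (dstep Q \<delta>) q u) w"
  by (induction u arbitrary: q) auto

lemma frun_path:
  fixes i :: "'i::semiring_1"
  assumes "\<forall>t<n. st (i + of_nat t + 1) = dstep Q \<delta> (st (i + of_nat t)) (L (i + of_nat t))"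
  shows "frun Q \<delta> \<eta> (st i) (map (\<lambda>t. L (i + of_nat t)) [0..<n])
      = map (\<lambda>t. estep Q \<delta> \<eta> (st (i + of_nat t)) (L (i + of_nat t))) [0..<n]
    \<and> foldl (dstep Q \<delta>) (st i) (map (\<lambda>t. L (i + of_nat t)) [0..<n]) = st (i + of_nat n)"
  using assms
proof (induction n)
  case (Suc n)
  have "st (i + of_nat (Suc n)) = st (i + of_nat n + 1)" by (simp add: ac_simps)
  then show ?case using Suc by (simp add: frun_append)
qed simp

locale irt =
  fixes k m :: nat and Q :: "nat set" and q0 :: nat and \<delta> \<eta> :: "nat \<Rightarrow> nat \<Rightarrow> nat"
  assumes irt: "is_irt k m Q q0 \<delta> \<eta>"
begin

lemma finite_states: "finite Q"
  and initial_state: "q0 \<in> Q"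
  and delta_closed: "q \<in> Q \<Longrightarrow> s < k \<Longrightarrow> \<delta> q s \<in> Q"
  and eta_less: "q \<in> Q \<Longrightarrow> s < k \<Longrightarrow> \<eta> q s < m"
  and delta_ex1_pred: "q \<in> Q \<Longrightarrow> s < k \<Longrightarrow> \<exists>!q'. q' \<in> Q \<and> \<delta> q' s = q"
  using irt unfolding is_irt_def by auto

lemma dpred_closed: "q \<in> Q \<Longrightarrow> s < k \<Longrightarrow> dpred Q \<delta> q s \<in> Q"
  and delta_dpred: "q \<in> Q \<Longrightarrow> s < k \<Longrightarrow> \<delta> (dpred Q \<delta> q s) s = q"
  unfolding dpred_def using theI'[OF delta_ex1_pred] by blast+

lemma dpred_delta: "q \<in> Q \<Longrightarrow> s < k \<Longrightarrow> dpred Q \<delta> (\<delta> q s) s = q"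
  unfolding dpred_def by (rule the1_equality[OF delta_ex1_pred]) (auto simp: delta_closed)

lemma dstep_closed: "q \<in> Q \<Longrightarrow> fst l < k \<Longrightarrow> dstep Q \<delta> q l \<in> Q"
  unfolding dstep_def using dpred_closed delta_closed by auto

lemma dstep_inv_letter: "q \<in> Q \<Longrightarrow> fst l < k \<Longrightarrow> dstep Q \<delta> (dstep Q \<delta> q l) (inv_letter l) = q"
  unfolding dstep_def inv_letter_def using delta_dpred dpred_delta by auto

lemma estep_inv_letter:
  "q \<in> Q \<Longrightarrow> fst l < k \<Longrightarrow> estep Q \<delta> \<eta> (dstep Q \<delta> q l) (inv_letter l) = inv_letter (estep Q \<delta> \<eta> q l)"
  unfolding dstep_def inv_letter_def estep_def using delta_dpred dpred_delta by auto

lemma fst_estep_less: "q \<in> Q \<Longrightarrow> fst l < k \<Longrightarrow> fst (estep Q \<delta> \<eta> q l) < m"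
  unfolding estep_def using dpred_closed eta_less by auto

lemma frun_words: "q \<in> Q \<Longrightarrow> w \<in> words k \<Longrightarrow> frun Q \<delta> \<eta> q w \<in> words m"
proof (induction w arbitrary: q)
  case (Cons l w)
  then have l: "fst l < k" and w: "w \<in> words k" by (simp_all add: words_def)
  have "frun Q \<delta> \<eta> (dstep Q \<delta> q l) w \<in> words m"
    using Cons.IH[OF dstep_closed[OF Cons.prems(1) l] w] .
  then show ?case using Cons.prems(1) l by (simp add: words_def fst_estep_less)
qed (simp add: words_def)

definition reachable :: "nat set" where
  "reachable = {foldl (dstep Q \<delta>) q0 u | u. u \<in> words k}"

lemma reachable_states:
  assumes "q \<in> reachable" shows "q \<in> Q"
proof -
  have "foldl (dstep Q \<delta>) q u \<in> Q" if "q \<in> Q" "u \<in> words k" for q u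
    using that by (induction u arbitrary: q) (auto simp: words_def dstep_closed)
  then show ?thesis
    using assms initial_state unfolding reachable_def by blast
qed

lemma initial_reachable: "q0 \<in> reachable"
  unfolding reachable_def by (auto intro!: exI[of _ "[]"] simp: words_def)

lemma dstep_reachable: "q \<in> reachable \<Longrightarrow> fst l < k \<Longrightarrow> dstep Q \<delta> q l \<in> reachable"
  unfolding reachable_def by (force intro: exI[of _ "_ @ [l]"] simp: words_def)

lemma finite_reachable: "finite reachable"
  using finite_subset[OF _ finite_states] reachable_states by blast

lemma int_run_exists:
  assumes "\<forall>i. fst (L i) < k"
  shows "\<exists>st. (\<forall>i. st i \<in> reachable) \<and> (\<forall>i::int. st (i + 1) = dstep Q \<delta> (st i) (L i))"
  by (rule int_recursion[where start = q0 and g = "\<lambda>i q. dstep Q \<delta> q (inv_letter (L i))"])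
     (use assms in \<open>auto simp: initial_reachable dstep_reachable reachable_states
        dstep_inv_letter[of _ "inv_letter _", simplified]\<close>)

lemma nat_run_exists:
  fixes N :: nat and L :: "nat \<Rightarrow> nat \<times> bool"
  assumes "\<forall>i<N. fst (L i) < k"
  shows "\<exists>st. (\<forall>i\<le>N. st i \<in> reachable) \<and> (\<forall>i<N. st (i + 1) = dstep Q \<delta> (st i) (L i))"
proof -
  define st where "st = rec_nat q0 (\<lambda>i q. dstep Q \<delta> q (L i))"
  have "st i \<in> reachable" if "i \<le> N" for i
    using that assms by (induction i) (simp_all add: st_def initial_reachable dstep_reachable)
  then show ?thesis by (intro exI[of _ st]) (simp add: st_def)
qed

end

locale snake_transducer =
  irt "length S" "length T" Q q0 \<delta> \<eta> + G: letter_group G S + H: letter_group H T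
  for G :: "('g, 'a) monoid_scheme" and S :: "'g list" and H :: "('h, 'b) monoid_scheme" and T :: "'h list"
    and Q q0 \<delta> \<eta> +
  assumes distinct_letters: "distinct S"
    and word_problem: "\<forall>w \<in> words (length S). \<forall>w' \<in> words (length S).
      word_val H T (frun Q \<delta> \<eta> q0 w) = word_val H T (frun Q \<delta> \<eta> q0 w') \<longleftrightarrow> word_val G S w = word_val G S w'"
begin

lemma frun_word_val_eq_one_iff:
  assumes q: "q \<in> reachable" and w: "w \<in> words (length S)"
  shows "word_val H T (frun Q \<delta> \<eta> q w) = \<one>\<^bsub>H\<^esub> \<longleftrightarrow> word_val G S w = \<one>\<^bsub>G\<^esub>"
proof -
  obtain u where u: "u \<in> words (length S)" "q = foldl (dstep Q \<delta>) q0 u"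
    using q unfolding reachable_def by blast
  have uw: "u @ w \<in> words (length S)" using u w by (auto simp: words_def)
  have fu: "frun Q \<delta> \<eta> q0 u \<in> words (length T)" and fw: "frun Q \<delta> \<eta> q w \<in> words (length T)"
    using frun_words initial_state reachable_states q u w by auto
  have "word_val H T (frun Q \<delta> \<eta> q0 (u @ w)) = word_val H T (frun Q \<delta> \<eta> q0 u)
      \<longleftrightarrow> word_val G S (u @ w) = word_val G S u"
    using word_problem[rule_format, OF uw u(1)] .
  then have "word_val H T (frun Q \<delta> \<eta> q0 u) \<otimes>\<^bsub>H\<^esub> word_val H T (frun Q \<delta> \<eta> q w) = word_val H T (frun Q \<delta> \<eta> q0 u)
      \<longleftrightarrow> word_val G S u \<otimes>\<^bsub>G\<^esub> word_val G S w = word_val G S u"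
    by (simp add: frun_append u(2)[symmetric] H.word_val_append[OF fu fw] G.word_val_append[OF u(1) w])
  then show ?thesis
    using fu fw u(1) w by (simp add: G.word_val_closed H.word_val_closed)
qed

lemma estep_inj:
  assumes q: "q \<in> reachable" and l: "fst l1 < length S" "fst l2 < length S"
    and eq: "estep Q \<delta> \<eta> q l1 = estep Q \<delta> \<eta> q l2"
  shows "l1 = l2"
proof -
  obtain u where u: "u \<in> words (length S)" "q = foldl (dstep Q \<delta>) q0 u"
    using q unfolding reachable_def by blast
  have l': "[l1] \<in> words (length S)" "[l2] \<in> words (length S)" using l by (auto simp: words_def)
  have ul: "u @ [l1] \<in> words (length S)" "u @ [l2] \<in> words (length S)"
    using u(1) l by (auto simp: words_def)
  have "frun Q \<delta> \<eta> q0 (u @ [l1]) = frun Q \<delta> \<eta> q0 (u @ [l2])"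
    using eq by (simp add: frun_append u(2)[symmetric])
  then have "word_val G S (u @ [l1]) = word_val G S (u @ [l2])"
    using word_problem[rule_format, OF ul] by simp
  then have "lval G S l1 = lval G S l2"
    using u(1) l l' by (simp add: G.word_val_append G.word_val_singleton G.word_val_closed G.lval_closed)
  then show ?thesis
    using G.lval_inj[OF distinct_letters l] eq snd_estep by metis
qed

lemma walk_returns_transfer:
  fixes i :: "'i::semiring_1"
  assumes st: "\<forall>t\<le>n. st (i + of_nat t) \<in> reachable"
    and L: "\<forall>t<n. fst (L (i + of_nat t)) < length S"
    and st_step: "\<forall>t<n. st (i + of_nat t + 1) = dstep Q \<delta> (st (i + of_nat t)) (L (i + of_nat t))"
    and \<omega>: "\<omega> i \<in> carrier G" "\<forall>t<n. \<omega> (i + of_nat t + 1) = \<omega> (i + of_nat t) \<otimes>\<^bsub>G\<^esub> lval G S (L (i + of_nat t))"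
    and \<omega>': "\<omega>' i \<in> carrier H"
      "\<forall>t<n. \<omega>' (i + of_nat t + 1) = \<omega>' (i + of_nat t) \<otimes>\<^bsub>H\<^esub> lval H T (estep Q \<delta> \<eta> (st (i + of_nat t)) (L (i + of_nat t)))"
  shows "\<omega> (i + of_nat n) = \<omega> i \<longleftrightarrow> \<omega>' (i + of_nat n) = \<omega>' i"
proof -
  let ?w = "map (\<lambda>t. L (i + of_nat t)) [0..<n]"
  have w: "?w \<in> words (length S)" using L by (auto simp: words_def)
  have st_i: "st i \<in> reachable" using st[rule_format, of 0] by simp
  have L': "\<forall>t<n. fst (estep Q \<delta> \<eta> (st (i + of_nat t)) (L (i + of_nat t))) < length T"
  proof (intro allI impI)
    fix t
    assume "t < n"
    then have "st (i + of_nat t) \<in> Q" using st reachable_states by simp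
    then show "fst (estep Q \<delta> \<eta> (st (i + of_nat t)) (L (i + of_nat t))) < length T"
      using L \<open>t < n\<close> fst_estep_less by simp
  qed
  have "\<omega> (i + of_nat n) = \<omega> i \<longleftrightarrow> word_val G S ?w = \<one>\<^bsub>G\<^esub>"
    by (rule G.walk_returns_iff[OF \<omega>(1) L \<omega>(2)])
  also have "\<dots> \<longleftrightarrow> word_val H T (frun Q \<delta> \<eta> (st i) ?w) = \<one>\<^bsub>H\<^esub>"
    using frun_word_val_eq_one_iff[OF st_i w] by simp
  also have "frun Q \<delta> \<eta> (st i) ?w = map (\<lambda>t. estep Q \<delta> \<eta> (st (i + of_nat t)) (L (i + of_nat t))) [0..<n]"
    using frun_path[OF st_step] by blast
  also have "word_val H T \<dots> = \<one>\<^bsub>H\<^esub> \<longleftrightarrow> \<omega>' (i + of_nat n) = \<omega>' i"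
    by (rule H.walk_returns_iff[OF \<omega>'(1) L' \<omega>'(2), symmetric])
  finally show ?thesis .
qed

lemma int_walk_inj_transfer:
  assumes st: "\<forall>i. st i \<in> reachable" and L: "\<forall>i. fst (L i) < length S"
    and st_step: "\<forall>i::int. st (i + 1) = dstep Q \<delta> (st i) (L i)"
    and \<omega>: "\<forall>i. \<omega> i \<in> carrier G" "\<forall>i. \<omega> (i + 1) = \<omega> i \<otimes>\<^bsub>G\<^esub> lval G S (L i)"
    and \<omega>': "\<forall>i. \<omega>' i \<in> carrier H" "\<forall>i. \<omega>' (i + 1) = \<omega>' i \<otimes>\<^bsub>H\<^esub> lval H T (estep Q \<delta> \<eta> (st i) (L i))"
  shows "inj \<omega> \<longleftrightarrow> inj \<omega>'"
proof -
  have return: "\<omega> (i + int n) = \<omega> i \<longleftrightarrow> \<omega>' (i + int n) = \<omega>' i" for i n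
    by (rule walk_returns_transfer[where i = i and n = n and st = st and L = L]) (use assms in auto)
  have "\<omega> x = \<omega> y \<longleftrightarrow> \<omega>' x = \<omega>' y" for x y
  proof (cases "x \<le> y")
    case True
    then have "y = x + int (nat (y - x))" by simp
    then show ?thesis using return[of x "nat (y - x)"] by metis
  next
    case False
    then have "x = y + int (nat (x - y))" by simp
    then show ?thesis using return[of y "nat (x - y)"] by metis
  qed
  then show ?thesis unfolding inj_def by simp
qed

lemma nat_walk_transfer:
  fixes N :: nat
  assumes st: "\<forall>i\<le>N. st i \<in> reachable" and L: "\<forall>i<N. fst (L i) < length S"
    and st_step: "\<forall>i<N. st (i + 1) = dstep Q \<delta> (st i) (L i)"
    and \<omega>: "\<forall>i\<le>N. \<omega> i \<in> carrier G" "\<forall>i<N. \<omega> (i + 1) = \<omega> i \<otimes>\<^bsub>G\<^esub> lval G S (L i)"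
    and \<omega>': "\<forall>i\<le>N. \<omega>' i \<in> carrier H"
      "\<forall>i<N. \<omega>' (i + 1) = \<omega>' i \<otimes>\<^bsub>H\<^esub> lval H T (estep Q \<delta> \<eta> (st i) (L i))"
  shows "(inj_on \<omega> {..<N} \<longleftrightarrow> inj_on \<omega>' {..<N}) \<and> (\<omega> N = \<omega> 0 \<longleftrightarrow> \<omega>' N = \<omega>' 0)"
proof -
  have return: "\<omega> (i + n) = \<omega> i \<longleftrightarrow> \<omega>' (i + n) = \<omega>' i" if "i + n \<le> N" for i n :: nat
    using walk_returns_transfer[where i = i and n = n and st = st and L = L and \<omega> = \<omega> and \<omega>' = \<omega>']
      assms that by simp
  have "\<omega> x = \<omega> y \<longleftrightarrow> \<omega>' x = \<omega>' y" if "x \<le> N" "y \<le> N" for x y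
  proof (cases "x \<le> y")
    case True
    then show ?thesis using return[of x "y - x"] that by auto
  next
    case False
    then show ?thesis using return[of y "x - y"] that by auto
  qed
  then show ?thesis unfolding inj_on_def by (metis lessThan_iff less_imp_le_nat order_refl zero_le)
qed

section \<open>The reduction\<close>

definition next_code :: "nat \<Rightarrow> nat \<Rightarrow> nat" where
  "next_code q c = (if c < 2 * length S then dstep Q \<delta> q (code_letter c) else 0)"

(* Labels outside S and its inverses get a label outside T and its inverses, so that invalid
   codes are sent to invalid codes. *)
definition out_code :: "nat \<Rightarrow> nat \<Rightarrow> nat" where
  "out_code q c = (if c < 2 * length S then letter_code (estep Q \<delta> \<eta> q (code_letter c)) else 2 * length T)"

definition lifted_tcode :: "nat \<Rightarrow> nat" where
  "lifted_tcode = product_tcode next_code out_code (sorted_list_of_set reachable)"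

lemma computable_lifted_tcode: "computable lifted_tcode"
  unfolding lifted_tcode_def
proof (rule computable_product_tcode)
  fix q
  show "computable (next_code q) \<and> computable (out_code q)"
    by (intro conjI computable_eventually_const[of "2 * length S" _ 0]
        computable_eventually_const[of "2 * length S" _ "2 * length T"]) (simp_all add: next_code_def out_code_def)
qed

lemma tedges_lifted_tcode:
  "set (tedges (lifted_tcode n)) = {product_edge next_code out_code q e | e q. e \<in> set (tedges n) \<and> q \<in> reachable}"
  unfolding lifted_tcode_def tedges_product_tcode using finite_reachable by simp

lemma lifted_edge:
  assumes "(a, a', c) \<in> set (tedges n)" "c < 2 * length S" "q \<in> reachable"
  shows "(prod_encode (a, q), prod_encode (a', dstep Q \<delta> q (code_letter c)), letter_code (estep Q \<delta> \<eta> q (code_letter c)))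
    \<in> set (tedges (lifted_tcode n))"
  unfolding tedges_lifted_tcode using assms
  by (auto simp: product_edge_def next_code_def out_code_def intro!: exI[of _ "(a, a', c)"])

lemma lifted_edge_projects:
  assumes valid: "valid_tcode (length S) n" and e: "(x, y, c') \<in> set (tedges (lifted_tcode n))"
  shows "\<exists>c. (fst (prod_decode x), fst (prod_decode y), c) \<in> set (tedges n) \<and> c < 2 * length S
    \<and> snd (prod_decode x) \<in> reachable \<and> snd (prod_decode y) = dstep Q \<delta> (snd (prod_decode x)) (code_letter c)
    \<and> code_letter c' = estep Q \<delta> \<eta> (snd (prod_decode x)) (code_letter c)"
proof -
  obtain a a' c q where edge: "(a, a', c) \<in> set (tedges n)" and q: "q \<in> reachable"
    and xyc: "(x, y, c') = product_edge next_code out_code q (a, a', c)"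
    using e unfolding tedges_lifted_tcode by auto
  then show ?thesis
    using valid_tcodeD[OF valid edge] by (auto simp: product_edge_def next_code_def out_code_def)
qed

lemma valid_lifted_tcode:
  assumes valid: "valid_tcode (length S) n"
  shows "valid_tcode (length T) (lifted_tcode n)"
proof (rule valid_tcodeI)
  fix x y c'
  assume "(x, y, c') \<in> set (tedges (lifted_tcode n))"
  then obtain a a' c q where edge: "(a, a', c) \<in> set (tedges n)" and q: "q \<in> reachable"
    and xyc: "(x, y, c') = product_edge next_code out_code q (a, a', c)"
    unfolding tedges_lifted_tcode by auto
  have c: "c < 2 * length S" and rev_edge: "(a', a, flip_code c) \<in> set (tedges n)"
    using valid_tcodeD[OF valid edge] by auto
  define l where "l = code_letter c"
  have l: "fst l < length S" using c by (simp add: l_def)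
  have qQ: "q \<in> Q" using q reachable_states by simp
  have xyc': "x = prod_encode (a, q)" "y = prod_encode (a', dstep Q \<delta> q l)" "c' = letter_code (estep Q \<delta> \<eta> q l)"
    using xyc c by (simp_all add: product_edge_def next_code_def out_code_def l_def)
  have "(y, x, flip_code c') = product_edge next_code out_code (dstep Q \<delta> q l) (a', a, flip_code c)"
    using xyc' flip_code_less[OF c] dstep_inv_letter[OF qQ l] estep_inv_letter[OF qQ l]
    by (simp add: product_edge_def next_code_def out_code_def code_letter_flip_code letter_code_inv_letter l_def)
  then have "(y, x, flip_code c') \<in> set (tedges (lifted_tcode n))"
    unfolding tedges_lifted_tcode using rev_edge dstep_reachable[OF q l] by blast
  moreover have "c' < 2 * length T" using xyc' fst_estep_less[OF qQ l] by simp
  ultimately show "c' < 2 * length T \<and> (y, x, flip_code c') \<in> set (tedges (lifted_tcode n))" by blast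
qed

lemma valid_of_valid_lifted_tcode:
  assumes valid: "valid_tcode (length T) (lifted_tcode n)"
  shows "valid_tcode (length S) n"
proof (rule valid_tcodeI)
  fix a a' c
  assume edge: "(a, a', c) \<in> set (tedges n)"
  then have "product_edge next_code out_code q0 (a, a', c) \<in> set (tedges (lifted_tcode n))"
    unfolding tedges_lifted_tcode using initial_reachable by blast
  then have out: "out_code q0 c < 2 * length T"
    and rev_edge: "(prod_encode (a', next_code q0 c), prod_encode (a, q0), flip_code (out_code q0 c))
      \<in> set (tedges (lifted_tcode n))"
    using valid_tcodeD[OF valid] by (auto simp: product_edge_def)
  then have c: "c < 2 * length S" by (auto simp: out_code_def split: if_splits)
  define l where "l = code_letter c"
  have l: "fst l < length S" using c by (simp add: l_def)
  define q where "q = dstep Q \<delta> q0 l"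
  have q: "q \<in> reachable" using dstep_reachable[OF initial_reachable l] by (simp add: q_def)
  obtain b b' d p where edge': "(b, b', d) \<in> set (tedges n)"
    and eq: "(prod_encode (a', q), prod_encode (a, q0), flip_code (out_code q0 c))
      = product_edge next_code out_code p (b, b', d)"
    using rev_edge c unfolding tedges_lifted_tcode by (auto simp: next_code_def q_def l_def)
  then have b: "b = a'" "b' = a" and out': "out_code q d = flip_code (out_code q0 c)"
    by (auto simp: product_edge_def)
  have d: "d < 2 * length S"
    using out' flip_code_less[OF out] by (auto simp: out_code_def split: if_splits)
  have "letter_code (estep Q \<delta> \<eta> q (code_letter d)) = letter_code (estep Q \<delta> \<eta> q (inv_letter l))"
    using out' c d estep_inv_letter[OF initial_state l]
    by (simp add: out_code_def letter_code_inv_letter q_def l_def)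
  then have "code_letter d = inv_letter l"
    using estep_inj[OF q] d l by (metis code_letter_letter_code fst_code_letter_less_iff fst_inv_letter)
  then have "d = flip_code c"
    by (metis letter_code_code_letter letter_code_inv_letter l_def)
  then show "c < 2 * length S \<and> (a', a, flip_code c) \<in> set (tedges n)"
    using edge' b c by simp
qed

lemma valid_lifted_tcode_iff: "valid_tcode (length T) (lifted_tcode n) \<longleftrightarrow> valid_tcode (length S) n"
  using valid_lifted_tcode valid_of_valid_lifted_tcode by blast

lemma infinite_snake_lifts:
  assumes valid: "valid_tcode (length S) n" and snake: "has_infinite_snake G S n"
  shows "has_infinite_snake H T (lifted_tcode n)"
proof -
  obtain \<omega> :: "int \<Rightarrow> 'g" and \<zeta> c where \<omega>: "inj \<omega>" "\<forall>i. \<omega> i \<in> carrier G"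
    and c: "\<forall>i. (\<zeta> i, \<zeta> (i + 1), c i) \<in> set (tedges n) \<and> \<omega> (i + 1) = \<omega> i \<otimes>\<^bsub>G\<^esub> lval G S (code_letter (c i))"
    using snake G.has_infinite_snake_iff[OF valid] by blast
  define L where "L i = code_letter (c i)" for i
  have c_less: "\<forall>i. c i < 2 * length S" using c valid_tcodeD[OF valid] by blast
  then have L: "\<forall>i. fst (L i) < length S" by (simp add: L_def)
  obtain st where st: "\<forall>i. st i \<in> reachable" "\<forall>i. st (i + 1) = dstep Q \<delta> (st i) (L i)"
    using int_run_exists[OF L] by blast
  have "\<forall>i. lval H T (estep Q \<delta> \<eta> (st i) (L i)) \<in> carrier H"
    using st(1) L by (simp add: H.lval_closed fst_estep_less reachable_states)
  from H.int_walk_exists[OF this] obtain \<omega>' :: "int \<Rightarrow> 'h" where \<omega>': "\<forall>i. \<omega>' i \<in> carrier H"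
    "\<forall>i. \<omega>' (i + 1) = \<omega>' i \<otimes>\<^bsub>H\<^esub> lval H T (estep Q \<delta> \<eta> (st i) (L i))"
    by blast
  have "inj \<omega>'"
    using int_walk_inj_transfer[where \<omega> = \<omega> and \<omega>' = \<omega>', OF st(1) L st(2) \<omega>(2) _ \<omega>'] \<omega>(1) c
    by (simp add: L_def)
  moreover have "(prod_encode (\<zeta> i, st i), prod_encode (\<zeta> (i + 1), st (i + 1)), letter_code (estep Q \<delta> \<eta> (st i) (L i)))
      \<in> set (tedges (lifted_tcode n))" for i
    using lifted_edge c c_less st by (simp add: L_def)
  ultimately show ?thesis
    unfolding H.has_infinite_snake_iff[OF valid_lifted_tcode[OF valid]] using \<omega>'
    by (intro exI[of _ \<omega>'] exI[of _ "\<lambda>i. prod_encode (\<zeta> i, st i)"]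
        exI[of _ "\<lambda>i. letter_code (estep Q \<delta> \<eta> (st i) (L i))"] conjI) auto
qed

lemma infinite_snake_projects:
  assumes valid: "valid_tcode (length S) n" and snake: "has_infinite_snake H T (lifted_tcode n)"
  shows "has_infinite_snake G S n"
proof -
  obtain \<omega>' :: "int \<Rightarrow> 'h" and \<zeta>' c' where \<omega>': "inj \<omega>'" "\<forall>i. \<omega>' i \<in> carrier H"
    and c': "\<forall>i. (\<zeta>' i, \<zeta>' (i + 1), c' i) \<in> set (tedges (lifted_tcode n))
      \<and> \<omega>' (i + 1) = \<omega>' i \<otimes>\<^bsub>H\<^esub> lval H T (code_letter (c' i))"
    using snake H.has_infinite_snake_iff[OF valid_lifted_tcode[OF valid]] by blast
  define A where "A i = fst (prod_decode (\<zeta>' i))" for i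
  define st where "st i = snd (prod_decode (\<zeta>' i))" for i
  have "\<forall>i. \<exists>c. (A i, A (i + 1), c) \<in> set (tedges n) \<and> c < 2 * length S \<and> st i \<in> reachable
      \<and> st (i + 1) = dstep Q \<delta> (st i) (code_letter c) \<and> code_letter (c' i) = estep Q \<delta> \<eta> (st i) (code_letter c)"
    using lifted_edge_projects[OF valid] c' unfolding A_def st_def by blast
  from choice[OF this] obtain c where c: "\<forall>i. (A i, A (i + 1), c i) \<in> set (tedges n) \<and> c i < 2 * length S
      \<and> st i \<in> reachable \<and> st (i + 1) = dstep Q \<delta> (st i) (code_letter (c i))
      \<and> code_letter (c' i) = estep Q \<delta> \<eta> (st i) (code_letter (c i))"
    by blast
  define L where "L i = code_letter (c i)" for i
  have L: "\<forall>i. fst (L i) < length S" using c by (simp add: L_def)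
  then have "\<forall>i. lval G S (L i) \<in> carrier G" by (simp add: G.lval_closed)
  from G.int_walk_exists[OF this] obtain \<omega> :: "int \<Rightarrow> 'g"
    where \<omega>: "\<forall>i. \<omega> i \<in> carrier G" "\<forall>i. \<omega> (i + 1) = \<omega> i \<otimes>\<^bsub>G\<^esub> lval G S (L i)"
    by blast
  have "inj \<omega>"
    using int_walk_inj_transfer[where st = st and L = L and \<omega> = \<omega> and \<omega>' = \<omega>', OF _ L _ \<omega> \<omega>'(2)] \<omega>'(1) c c'
    by (simp add: L_def)
  then show ?thesis
    unfolding G.has_infinite_snake_iff[OF valid] using \<omega> c
    by (intro exI[of _ \<omega>] exI[of _ A] exI[of _ c] conjI) (auto simp: L_def)
qed

lemma ouroboros_lifts:
  assumes valid: "valid_tcode (length S) n" and ouroboros: "has_ouroboros G S n"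
  shows "has_ouroboros H T (lifted_tcode n)"
proof -
  obtain N and \<omega> :: "nat \<Rightarrow> 'g" and \<zeta> c where N: "N \<ge> 3"
    and \<omega>: "inj_on \<omega> {..<N}" "\<omega> N = \<omega> 0" "\<forall>i\<le>N. \<omega> i \<in> carrier G"
    and c: "\<forall>i<N. (\<zeta> i, \<zeta> (i + 1), c i) \<in> set (tedges n) \<and> \<omega> (i + 1) = \<omega> i \<otimes>\<^bsub>G\<^esub> lval G S (code_letter (c i))"
    using ouroboros G.has_ouroboros_iff[OF valid] by blast
  define L where "L i = code_letter (c i)" for i
  have c_less: "\<forall>i<N. c i < 2 * length S" using c valid_tcodeD[OF valid] by blast
  then have L: "\<forall>i<N. fst (L i) < length S" by (simp add: L_def)
  obtain st where st: "\<forall>i\<le>N. st i \<in> reachable" "\<forall>i<N. st (i + 1) = dstep Q \<delta> (st i) (L i)"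
    using nat_run_exists[OF L] by blast
  have "\<forall>i<N. lval H T (estep Q \<delta> \<eta> (st i) (L i)) \<in> carrier H"
    using st(1) L by (simp add: H.lval_closed fst_estep_less reachable_states)
  from H.nat_walk_exists[OF this] obtain \<omega>' :: "nat \<Rightarrow> 'h" where \<omega>': "\<forall>i\<le>N. \<omega>' i \<in> carrier H"
    "\<forall>i<N. \<omega>' (i + 1) = \<omega>' i \<otimes>\<^bsub>H\<^esub> lval H T (estep Q \<delta> \<eta> (st i) (L i))"
    by blast
  have "inj_on \<omega>' {..<N} \<and> \<omega>' N = \<omega>' 0"
    using nat_walk_transfer[where \<omega> = \<omega> and \<omega>' = \<omega>', OF st(1) L st(2) \<omega>(3) _ \<omega>'] \<omega>(1,2) c
    by (simp add: L_def)
  moreover have "(prod_encode (\<zeta> i, st i), prod_encode (\<zeta> (i + 1), st (i + 1)), letter_code (estep Q \<delta> \<eta> (st i) (L i)))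
      \<in> set (tedges (lifted_tcode n))" if "i < N" for i
    using lifted_edge c c_less st that by (simp add: L_def)
  ultimately show ?thesis
    unfolding H.has_ouroboros_iff[OF valid_lifted_tcode[OF valid]] using N \<omega>'
    by (intro exI[of _ N] conjI exI[of _ \<omega>'] exI[of _ "\<lambda>i. prod_encode (\<zeta> i, st i)"]
        exI[of _ "\<lambda>i. letter_code (estep Q \<delta> \<eta> (st i) (L i))"]) auto
qed

lemma ouroboros_projects:
  assumes valid: "valid_tcode (length S) n" and ouroboros: "has_ouroboros H T (lifted_tcode n)"
  shows "has_ouroboros G S n"
proof -
  obtain N and \<omega>' :: "nat \<Rightarrow> 'h" and \<zeta>' c' where N: "N \<ge> 3"
    and \<omega>': "inj_on \<omega>' {..<N}" "\<omega>' N = \<omega>' 0" "\<forall>i\<le>N. \<omega>' i \<in> carrier H"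
    and c': "\<forall>i<N. (\<zeta>' i, \<zeta>' (i + 1), c' i) \<in> set (tedges (lifted_tcode n))
      \<and> \<omega>' (i + 1) = \<omega>' i \<otimes>\<^bsub>H\<^esub> lval H T (code_letter (c' i))"
    using ouroboros H.has_ouroboros_iff[OF valid_lifted_tcode[OF valid]] by blast
  define A where "A i = fst (prod_decode (\<zeta>' i))" for i
  define st where "st i = snd (prod_decode (\<zeta>' i))" for i
  have "\<forall>i. \<exists>c. i < N \<longrightarrow> (A i, A (i + 1), c) \<in> set (tedges n) \<and> c < 2 * length S \<and> st i \<in> reachable
      \<and> st (i + 1) = dstep Q \<delta> (st i) (code_letter c) \<and> code_letter (c' i) = estep Q \<delta> \<eta> (st i) (code_letter c)"
    using lifted_edge_projects[OF valid] c' unfolding A_def st_def by blast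
  from choice[OF this] obtain c where c: "\<forall>i<N. (A i, A (i + 1), c i) \<in> set (tedges n) \<and> c i < 2 * length S
      \<and> st i \<in> reachable \<and> st (i + 1) = dstep Q \<delta> (st i) (code_letter (c i))
      \<and> code_letter (c' i) = estep Q \<delta> \<eta> (st i) (code_letter (c i))"
    by blast
  define L where "L i = code_letter (c i)" for i
  have L: "\<forall>i<N. fst (L i) < length S" using c by (simp add: L_def)
  have st_Suc: "st (Suc i) \<in> reachable" if "i < N" for i
    using c L that dstep_reachable by (simp add: L_def)
  have st: "\<forall>i\<le>N. st i \<in> reachable"
  proof (intro allI impI)
    fix i
    assume "i \<le> N"
    then show "st i \<in> reachable"
      using c N st_Suc by (cases i) auto
  qed
  have "\<forall>i<N. lval G S (L i) \<in> carrier G" using L by (simp add: G.lval_closed)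
  from G.nat_walk_exists[OF this] obtain \<omega> :: "nat \<Rightarrow> 'g"
    where \<omega>: "\<forall>i\<le>N. \<omega> i \<in> carrier G" "\<forall>i<N. \<omega> (i + 1) = \<omega> i \<otimes>\<^bsub>G\<^esub> lval G S (L i)"
    by blast
  have "inj_on \<omega> {..<N} \<and> \<omega> N = \<omega> 0"
    using nat_walk_transfer[where \<omega> = \<omega> and \<omega>' = \<omega>', OF st L _ \<omega> \<omega>'(3)] \<omega>'(1,2) c c'
    by (simp add: L_def)
  then show ?thesis
    unfolding G.has_ouroboros_iff[OF valid] using N \<omega> c
    by (intro exI[of _ N] conjI exI[of _ \<omega>] exI[of _ A] exI[of _ c]) (auto simp: L_def)
qed

lemma infinite_snake_problem_reduction:
  "n \<in> infinite_snake_problem G S \<longleftrightarrow> lifted_tcode n \<in> infinite_snake_problem H T"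
  unfolding infinite_snake_problem_def
  using valid_lifted_tcode_iff infinite_snake_lifts infinite_snake_projects by blast

lemma ouroboros_problem_reduction:
  "n \<in> ouroboros_problem G S \<longleftrightarrow> lifted_tcode n \<in> ouroboros_problem H T"
  unfolding ouroboros_problem_def
  using valid_lifted_tcode_iff ouroboros_lifts ouroboros_projects by blast

end

theorem proposition7:
  fixes G :: "('g, 'a) monoid_scheme" and S :: "'g list"
    and H :: "('h, 'b) monoid_scheme" and T :: "'h list"
    and \<phi> :: "'g \<Rightarrow> 'h"
  assumes "fg_group G S" and "fg_group H T"
    and "snake_embedding G S H T \<phi>"
  shows "m_reducible (infinite_snake_problem G S) (infinite_snake_problem H T)
       \<and> m_reducible (ouroboros_problem G S) (ouroboros_problem H T)"
proof -
  \<comment> \<open>only the word-problem part of the snake embedding is needed\<close>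
  obtain Q q0 \<delta> \<eta> where irt: "is_irt (length S) (length T) Q q0 \<delta> \<eta>"
    and word_problem: "\<forall>w \<in> words (length S). \<forall>w' \<in> words (length S).
      word_val H T (frun Q \<delta> \<eta> q0 w) = word_val H T (frun Q \<delta> \<eta> q0 w') \<longleftrightarrow> word_val G S w = word_val G S w'"
    using assms(3) unfolding snake_embedding_def by blast
  have "group G" "distinct S" "set S \<subseteq> carrier G" "group H" "set T \<subseteq> carrier H"
    using assms(1,2) unfolding fg_group_def by auto
  then interpret snake_transducer G S H T Q q0 \<delta> \<eta>
    by (intro snake_transducer.intro irt.intro letter_group.intro letter_group_axioms.intro
        snake_transducer_axioms.intro irt word_problem)
  show ?thesis
    unfolding m_reducible_def
    using computable_lifted_tcode infinite_snake_problem_reduction ouroboros_problem_reduction by blast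
qed

end
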